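(* For every base $\mathcal{B}$, atomic multisets $L$ and $K$, and atom $p$: $L\Vdash^K_{\mathcal{B}}p$ if and only if $L,K\vdash_{\mathcal{B}}p$.
   Context: Fix a set $\mathbb{A}$ of propositional atoms. ILL formulae: $\phi ::= p\in\mathbb{A} \mid \top \mid 0 \mid 1 \mid \phi\multimap\phi \mid \phi\otimes\phi \mid \phi\,\&\,\phi \mid \phi\oplus\phi \mid\ !\phi$. All multisets are finite; "$\Gamma,\Delta$" denotes multiset union. Atomic rules and bases: an atomic sequent is $P\Rightarrow p$ with $P$ a multiset of atoms, $p$ an atom. An atomic box is a multiset of atomic sequents. An atomic rule is a triple $\langle\mathbf{A},\mathbf{S},p\rangle$ with $\mathbf{A}$ a multiset of atomic boxes, $\mathbf{S}$ an atomic box, $p$ an atom. A base is a set of atomic rules. An atom $p$ is persistent in $\mathcal{B}$ if some $\langle\varnothing,\mathbf{S},p\rangle\in\mathcal{B}$ has $\mathbf{S}\neq\varnothing$. Derivability $\vdash_{\mathcal{B}}$: (Ref) $p\vdash_{\mathcal{B}}p$; (App) if $\langle\mathbf{A},\mathbf{S},p\rangle\in\mathcal{B}$ with $\mathbf{A}=\{\mathbf{T}_1,\dots,\mathbf{T}_m\}$, and there are atomic multisets $C_1,\dots,C_n$ ($n\ge m$) and a multiset $D=\{d_{m+1},\dots,d_n\}$ of atoms persistent in $\mathcal{B}$ such that $C_i,Q\vdash_{\mathcal{B}}q$ for every $i\le m$ and every $Q\Rightarrow q\in\mathbf{T}_i$, $C_j\vdash_{\mathcal{B}}d_j$ for every $m<j\le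 n$, and $D,U\vdash_{\mathcal{B}}v$ for every $U\Rightarrow v\in\mathbf{S}$, then $C_1,\dots,C_n\vdash_{\mathcal{B}}p$. Support $\Vdash^L_{\mathcal{B}}$ (base $\mathcal{B}$, atomic multiset $L$), by induction on formulae: $\Vdash^L_{\mathcal{B}}p$ iff $L\vdash_{\mathcal{B}}p$; $\Vdash^L_{\mathcal{B}}\varphi\multimap\psi$ iff $\varphi\Vdash^L_{\mathcal{B}}\psi$; $\Vdash^L_{\mathcal{B}}\varphi\otimes\psi$ iff for all $\mathcal{C}\supseteq\mathcal{B}$, atomic $K$, atoms $p$: if $\varphi,\psi\Vdash^K_{\mathcal{C}}p$ then $\Vdash^{L,K}_{\mathcal{C}}p$; $\Vdash^L_{\mathcal{B}}1$ iff for all $\mathcal{C}\supseteq\mathcal{B}$, $K$, $p$: if $\Vdash^K_{\mathcal{C}}p$ then $\Vdash^{L,K}_{\mathcal{C}}p$; $\Vdash^L_{\mathcal{B}}\varphi\&\psi$ iff $\Vdash^L_{\mathcal{B}}\varphi$ and $\Vdash^L_{\mathcal{B}}\psi$; $\Vdash^L_{\mathcal{B}}\varphi\oplus\psi$ iff for all $\mathcal{C}\supseteq\mathcal{B}$, $K$, $p$: if $\varphi\Vdash^K_{\mathcal{C}}p$ and $\psi\Vdash^K_{\mathcal{C}}p$ then $\Vdash^{L,K}_{\mathcal{C}}p$; $\Vdash^L_{\mathcal{B}}0$ iff $\Vdash^{L,K}_{\mathcal{B}}p$ for all atoms $p$ and atomic $K$; $\Vdash^L_{\mathcal{B}}\top$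 always; $\Vdash^L_{\mathcal{B}}!\varphi$ iff for all $\mathcal{C}\supseteq\mathcal{B}$, $K$, $p$: if (for all $\mathcal{D}\supseteq\mathcal{C}$, $\Vdash^{\varnothing}_{\mathcal{D}}\varphi$ implies $\Vdash^K_{\mathcal{D}}p$) then $\Vdash^{L,K}_{\mathcal{C}}p$. For nonempty multisets: $\Vdash^L_{\mathcal{B}}\Gamma,\Delta$ iff $L=K,M$ with $\Vdash^K_{\mathcal{B}}\Gamma$ and $\Vdash^M_{\mathcal{B}}\Delta$. For a nonempty antecedent written $!\Delta,\Theta$, where $!\Delta$ collects the formulae with top-level connective $!$ (with $\Delta$ the formulae under those $!$) and $\Theta$ contains none: $!\Delta,\Theta\Vdash^L_{\mathcal{B}}\varphi$ iff for all $\mathcal{C}\supseteq\mathcal{B}$ and atomic $K$, if $\Vdash^{\varnothing}_{\mathcal{C}}\delta$ for every $\delta\in\Delta$ and $\Vdash^K_{\mathcal{C}}\Theta$ then $\Vdash^{L,K}_{\mathcal{C}}\varphi$ (when $\Theta$ is empty, $K$ is empty). An empty antecedent: $\varnothing\Vdash^L_{\mathcal{B}}\varphi$ means $\Vdash^L_{\mathcal{B}}\varphi$. An atomic multiset $L$ used as an antecedent is regarded as a multiset of atomic formulae. *)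

theory Defs
  imports Main "HOL-Library.Multiset"
begin

type_synonym 'a asequent = "'a multiset \<times> 'a"
type_synonym 'a box = "'a asequent multiset"
type_synonym 'a arule = "'a box multiset \<times> 'a box \<times> 'a"
type_synonym 'a base = "'a arule set"

definition persistent :: "'a base \<Rightarrow> 'a \<Rightarrow> bool" where
  "persistent B p \<longleftrightarrow> (\<exists>S. ({#}, S, p) \<in> B \<and> S \<noteq> {#})"

text \<open>Derivability. The boxes of A are enumerated by a list Ts (mset Ts = A);
  C_1..C_n are the list Cs, the persistent atoms d_{m+1}..d_n are the list ds.\<close>

inductive derives :: "'a base \<Rightarrow> 'a multiset \<Rightarrow> 'a \<Rightarrow> bool" where
  Ref: "derives B {#p#} p"
| App: "\<lbrakk> (A, S, p) \<in> B;
          mset Ts = A;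
          length Cs = length Ts + length ds;
          \<forall>i < length Ts. \<forall>Qq \<in># Ts ! i. derives B (Cs ! i + fst Qq) (snd Qq);
          \<forall>j < length ds. persistent B (ds ! j) \<and> derives B (Cs ! (length Ts + j)) (ds ! j);
          \<forall>Uv \<in># S. derives B (mset ds + fst Uv) (snd Uv) \<rbrakk>
        \<Longrightarrow> derives B (sum_list Cs) p"

datatype 'a fm = Atom 'a | Top | Zero | One | Lolli "'a fm" "'a fm" | Tensor "'a fm" "'a fm"
  | With "'a fm" "'a fm" | Plus "'a fm" "'a fm" | Bang "'a fm"

text \<open>An antecedent item: its support predicate, and, if the formula is of the form !\<delta>,
  the predicate (\<lambda>C. support of \<delta> at C with the empty multiset).\<close>

type_synonym 'a item = "('a base \<Rightarrow> 'a multiset \<Rightarrow> bool) \<times> ('a base \<Rightarrow> bool) option"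

fun msupp_items :: "'a base \<Rightarrow> 'a multiset \<Rightarrow> 'a item list \<Rightarrow> bool" where
  "msupp_items C K [] \<longleftrightarrow> K = {#}"
| "msupp_items C K (it # its) \<longleftrightarrow>
     (\<exists>K1 K2. K = K1 + K2 \<and> fst it C K1 \<and> msupp_items C K2 its)"

definition ante_items :: "'a base \<Rightarrow> 'a multiset \<Rightarrow> 'a item list
    \<Rightarrow> ('a base \<Rightarrow> 'a multiset \<Rightarrow> bool) \<Rightarrow> bool" where
  "ante_items B L its Q \<longleftrightarrow>
     (if its = [] then Q B L
      else (\<forall>C K. B \<subseteq> C \<longrightarrow>
              (\<forall>it \<in> set its. case snd it of Some d \<Rightarrow> d C | None \<Rightarrow> True) \<longrightarrow>
              msupp_items C K (filter (\<lambda>it. snd it = None) its) \<longrightarrow>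
              Q C (L + K)))"

primrec sem :: "'a fm \<Rightarrow> 'a item" where
  "sem (Atom p) = ((\<lambda>B L. derives B L p), None)"
| "sem Top = ((\<lambda>B L. True), None)"
| "sem Zero = ((\<lambda>B L. \<forall>p K. derives B (L + K) p), None)"
| "sem One = ((\<lambda>B L. \<forall>C K p. B \<subseteq> C \<longrightarrow> derives C K p \<longrightarrow> derives C (L + K) p), None)"
| "sem (Lolli \<phi> \<psi>) = ((\<lambda>B L. ante_items B L [sem \<phi>] (fst (sem \<psi>))), None)"
| "sem (Tensor \<phi> \<psi>) = ((\<lambda>B L. \<forall>C K p. B \<subseteq> C \<longrightarrow>
        ante_items C K [sem \<phi>, sem \<psi>] (\<lambda>D M. derives D M p) \<longrightarrow> derives C (L + K) p), None)"
| "sem (With \<phi> \<psi>) = ((\<lambda>B L. fst (sem \<phi>) B L \<and> fst (sem \<psi>) B L), None)"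
| "sem (Plus \<phi> \<psi>) = ((\<lambda>B L. \<forall>C K p. B \<subseteq> C \<longrightarrow>
        ante_items C K [sem \<phi>] (\<lambda>D M. derives D M p) \<longrightarrow>
        ante_items C K [sem \<psi>] (\<lambda>D M. derives D M p) \<longrightarrow> derives C (L + K) p), None)"
| "sem (Bang \<phi>) = ((\<lambda>B L. \<forall>C K p. B \<subseteq> C \<longrightarrow>
        (\<forall>D. C \<subseteq> D \<longrightarrow> fst (sem \<phi>) D {#} \<longrightarrow> derives D K p) \<longrightarrow> derives C (L + K) p),
      Some (\<lambda>C. fst (sem \<phi>) C {#}))"

definition supp :: "'a base \<Rightarrow> 'a multiset \<Rightarrow> 'a fm \<Rightarrow> bool" where
  "supp B L \<phi> = fst (sem \<phi>) B L"

inductive msupp :: "'a base \<Rightarrow> 'a multiset \<Rightarrow> 'a fm multiset \<Rightarrow> bool" where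
  "msupp B {#} {#}"
| "supp B K \<phi> \<Longrightarrow> msupp B M \<Gamma> \<Longrightarrow> msupp B (K + M) (add_mset \<phi> \<Gamma>)"

definition is_bang :: "'a fm \<Rightarrow> bool" where
  "is_bang \<phi> \<longleftrightarrow> (\<exists>\<delta>. \<phi> = Bang \<delta>)"

definition seq_supp :: "'a base \<Rightarrow> 'a fm multiset \<Rightarrow> 'a multiset \<Rightarrow> 'a fm \<Rightarrow> bool" where
  "seq_supp B \<Gamma> L \<phi> \<longleftrightarrow>
     (if \<Gamma> = {#} then supp B L \<phi>
      else (\<forall>C K. B \<subseteq> C \<longrightarrow>
              (\<forall>\<delta>. Bang \<delta> \<in># \<Gamma> \<longrightarrow> supp C {#} \<delta>) \<longrightarrow>
              msupp C K (filter_mset (\<lambda>\<phi>. \<not> is_bang \<phi>) \<Gamma>) \<longrightarrow>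
              supp C (L + K) \<phi>))"

end

theory Submission
  imports Defs
begin

text \<open>Left to right, instantiate the extension by the base itself and the atomic
  multiset L by L, which supports the atoms of L by (Ref). Right to left, derivability
  persists along base extensions, and an atom supported at M may be cut against its
  occurrence in a derivation: by induction on the derivation, the occurrence lies in one
  of the contexts C_i of the last (App) step, and only that context is modified.\<close>

lemma persistent_mono: "persistent B d \<Longrightarrow> B \<subseteq> C \<Longrightarrow> persistent C d"
  unfolding persistent_def by blast

lemma derives_mono: "derives B X p \<Longrightarrow> B \<subseteq> C \<Longrightarrow> derives C X p"
proof (induction rule: derives.induct)
  case (Ref B p)
  show ?case by (rule derives.Ref)
next
  case (App A S p B Ts Cs ds)
  then show ?case
    by (intro derives.App[of A S p C Ts Cs ds]) (auto intro: persistent_mono)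
qed

lemma sum_list_update_add:
  fixes xs :: "'b::comm_monoid_add list"
  shows "i < length xs \<Longrightarrow> sum_list (xs[i := y]) + xs ! i = sum_list xs + y"
  by (induction xs arbitrary: i) (auto simp: add_ac split: nat.split)

lemma mset_in_sum_list_nth:
  assumes "x \<in># sum_list Ms"
  obtains i where "i < length Ms" and "x \<in># Ms ! i"
  using assms unfolding sum_mset_sum_list[symmetric] by (auto simp: in_set_conv_nth)

lemma derives_cut:
  "derives B (add_mset l X) q \<Longrightarrow> derives B M l \<Longrightarrow> derives B (X + M) q"
proof (induction "add_mset l X" q arbitrary: X rule: derives.induct)
  case (Ref B p)
  then show ?case by simp
next
  case (App A S p B Ts Cs ds)
  obtain i where i: "i < length Cs" "l \<in># Cs ! i"
    using App.hyps(7) by (metis mset_in_sum_list_nth union_single_eq_member)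
  then obtain R where R: "Cs ! i = add_mset l R"
    by (metis multi_member_split)
  define Cs' where "Cs' = Cs[i := R + M]"
  have "sum_list Cs' + Cs ! i = sum_list Cs + R + M"
    unfolding Cs'_def using sum_list_update_add[OF i(1)] by (simp add: add_ac)
  then have sum: "sum_list Cs' = X + M"
    using R App.hyps(7) by simp
  have nth: "Cs' ! k = (if k = i then R + M else Cs ! k)" if "k < length Cs" for k
    using that i(1) by (simp add: Cs'_def)
  have cut_box: "derives B (X' + M) (snd Qq)"
    if "k < length Ts" "Qq \<in># Ts ! k" "Cs ! k + fst Qq = add_mset l X'" for k Qq X'
    using App.hyps(4) App.prems that by blast
  have cut_persistent: "derives B (X' + M) (ds ! j)"
    if "j < length ds" "Cs ! (length Ts + j) = add_mset l X'" for j X'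
    using App.hyps(5) App.prems that by blast
  have "derives B (sum_list Cs') p"
  proof (rule derives.App[OF App.hyps(1,2)])
    show "length Cs' = length Ts + length ds"
      using App.hyps(3) by (simp add: Cs'_def)
    show "\<forall>k < length Ts. \<forall>Qq \<in># Ts ! k. derives B (Cs' ! k + fst Qq) (snd Qq)"
    proof (intro allI impI ballI)
      fix k Qq assume k: "k < length Ts" and Qq: "Qq \<in># Ts ! k"
      show "derives B (Cs' ! k + fst Qq) (snd Qq)"
      proof (cases "k = i")
        case True
        then have "derives B (R + fst Qq + M) (snd Qq)"
          using cut_box[OF k Qq] R by simp
        then show ?thesis using True k App.hyps(3) nth by (simp add: add_ac)
      next
        case False
        then show ?thesis using App.hyps(3,4) k Qq nth by simp
      qed
    qed
    show "\<forall>j < length ds. persistent B (ds ! j) \<and> derives B (Cs' ! (length Ts + j)) (ds ! j)"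
    proof (intro allI impI conjI)
      fix j assume j: "j < length ds"
      show "persistent B (ds ! j)" using App.hyps(5) j by blast
      show "derives B (Cs' ! (length Ts + j)) (ds ! j)"
      proof (cases "length Ts + j = i")
        case True
        then show ?thesis using cut_persistent[OF j] R j App.hyps(3) nth by simp
      next
        case False
        then show ?thesis using App.hyps(3,5) j nth by simp
      qed
    qed
    show "\<forall>Uv \<in># S. derives B (mset ds + fst Uv) (snd Uv)"
      using App.hyps(6) by blast
  qed
  then show ?case using sum by simp
qed

lemma derives_cut_msupp:
  "msupp C M (image_mset Atom L) \<Longrightarrow> derives C (L + X) p \<Longrightarrow> derives C (M + X) p"
proof (induction C M "image_mset Atom L" arbitrary: L X rule: msupp.induct)
  case (1 C)
  then show ?case by simp
next
  case (2 C K \<phi> M \<Gamma>)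
  obtain a L' where L: "L = add_mset a L'" and a: "\<phi> = Atom a" and \<Gamma>: "\<Gamma> = image_mset Atom L'"
    using msed_map_invR[OF "2.hyps"(4)[symmetric]] by metis
  have "derives C K a"
    using "2.hyps"(1) a by (simp add: supp_def)
  then have "derives C (L' + X + K) p"
    using derives_cut "2.prems" L by fastforce
  then have "derives C (M + (X + K)) p"
    using "2.hyps"(3)[OF \<Gamma>, of "X + K"] by (simp add: add_ac)
  then show ?case by (simp add: add_ac)
qed

lemma msupp_image_Atom: "msupp B L (image_mset Atom L)"
proof (induction L)
  case empty
  show ?case by (simp add: msupp.intros(1))
next
  case (add a L)
  have "supp B {#a#} (Atom a)" by (simp add: supp_def derives.Ref)
  from msupp.intros(2)[OF this add] show ?case by simp
qed

lemma seq_supp_image_Atom: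
  assumes "L \<noteq> {#}"
  shows "seq_supp B (image_mset Atom L) K \<phi> \<longleftrightarrow>
    (\<forall>C M. B \<subseteq> C \<longrightarrow> msupp C M (image_mset Atom L) \<longrightarrow> supp C (K + M) \<phi>)"
proof -
  have "filter_mset (\<lambda>\<phi>. \<not> is_bang \<phi>) (image_mset Atom L) = image_mset Atom L"
    by (induction L) (auto simp: is_bang_def)
  then show ?thesis
    using assms by (auto simp: seq_supp_def)
qed

theorem lemma2:
  fixes B :: "'a base" and L K :: "'a multiset" and p :: 'a
  shows "seq_supp B (image_mset Atom L) K (Atom p) \<longleftrightarrow> derives B (L + K) p"
proof (cases "L = {#}")
  case True
  then show ?thesis by (simp add: seq_supp_def supp_def)
next
  case False
  have "seq_supp B (image_mset Atom L) K (Atom p) \<longleftrightarrow>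
    (\<forall>C M. B \<subseteq> C \<longrightarrow> msupp C M (image_mset Atom L) \<longrightarrow> derives C (K + M) p)"
    using seq_supp_image_Atom[OF False] by (simp add: supp_def)
  also have "\<dots> \<longleftrightarrow> derives B (L + K) p"
  proof
    assume "\<forall>C M. B \<subseteq> C \<longrightarrow> msupp C M (image_mset Atom L) \<longrightarrow> derives C (K + M) p"
    then show "derives B (L + K) p"
      using msupp_image_Atom by (metis add.commute order_refl)
  next
    assume "derives B (L + K) p"
    then show "\<forall>C M. B \<subseteq> C \<longrightarrow> msupp C M (image_mset Atom L) \<longrightarrow> derives C (K + M) p"
      using derives_mono derives_cut_msupp by (metis add.commute)
  qed
  finally show ?thesis .
qed

end
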